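(* Let $m\geq 2$ and $n\geq 3$ be integers and let $M$ be the adjacency matrix of the oriented Dutch windmill graph $D^m_n$, and let $I$ denote the identity matrix of order $m(n-1)+1$. Then: (1) $M^{2n-1}=mM^{n-1}$; (2) $M^{n-1}\neq 0$; (3) $M^{2n-2}\neq mM^{n-2}$; (4) $M^n\neq mI$; (5) $M^{n^2-1}=m^{n-1}M^{n-1}$.
   Context: For integers $m\geq 1$, $n\geq 3$, the oriented Dutch windmill graph $D^m_n$ is the directed graph with vertex set $V=\{1,2,\ldots,m(n-1)+1\}$ whose directed edges $(a,b)$ are exactly: $(1,(k-1)(n-1)+2)$ for $k\in\{1,\ldots,m\}$; $((k-1)(n-1)+i,(k-1)(n-1)+i+1)$ for $k\in\{1,\ldots,m\}$ and $i\in\{2,\ldots,n-1\}$; and $((k-1)(n-1)+n,1)$ for $k\in\{1,\ldots,m\}$. Its adjacency matrix $M=(a_{ij})$ is the real square matrix with $a_{ij}=1$ if $(i,j)$ is an edge and $a_{ij}=0$ otherwise. *)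

theory Defs
  imports "Jordan_Normal_Form.Matrix"
begin

definition windmill_edge :: "nat \<Rightarrow> nat \<Rightarrow> nat \<Rightarrow> nat \<Rightarrow> bool" where
  "windmill_edge m n a b \<longleftrightarrow>
     (\<exists>k\<in>{1..m}. a = 1 \<and> b = (k - 1) * (n - 1) + 2) \<or>
     (\<exists>k\<in>{1..m}. \<exists>i\<in>{2..n-1}. a = (k - 1) * (n - 1) + i \<and> b = (k - 1) * (n - 1) + i + 1) \<or>
     (\<exists>k\<in>{1..m}. a = (k - 1) * (n - 1) + n \<and> b = 1)"

text \<open>Adjacency matrix; vertex v corresponds to (0-based) row/column index v - 1.\<close>
definition windmill_adj :: "nat \<Rightarrow> nat \<Rightarrow> real mat" where
  "windmill_adj m n = mat (m * (n - 1) + 1) (m * (n - 1) + 1)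
      (\<lambda>(i, j). if windmill_edge m n (i + 1) (j + 1) then 1 else 0)"

end

theory Submission
  imports Defs
begin

(* Index the hub of the windmill by 0 and the i-th vertex of the k-th blade by k(n-1)+i.
   A blade vertex has exactly one out-neighbour, so its row in M^(q+1) is the row of that
   neighbour in M^q, and after n - i steps the walk reaches the hub. The hub row of M^(q+1) is
   the sum of the rows in M^q of the m first blade vertices; following each blade back to the
   hub shows that the hub row of M^(q+n) is m times the hub row of M^q. Every other row of
   M^(p+n) reduces to the hub row after n - i steps, and so does the same row of M^p when
   p >= n - 1; hence M^(p+n) = m M^p for p >= n - 1, which gives (1) and, iterated, (5).
   For (2)-(4), the entries in the row of the first vertex of blade 0 that count a unique walk
   are 1, whereas the right-hand sides have entry 0 or m there. *)

lemma mult_add_eq_mult_add_iff: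
  fixes d q q' r r' :: nat
  assumes "1 \<le> r" "r \<le> d" "1 \<le> r'" "r' \<le> d"
  shows "q * d + r = q' * d + r' \<longleftrightarrow> q = q' \<and> r = r'"
proof
  obtain s s' where s: "r = Suc s" "r' = Suc s'" "s < d" "s' < d"
    using assms by (metis Suc_le_D Suc_le_lessD One_nat_def)
  assume "q * d + r = q' * d + r'"
  then have eq: "q * d + s = q' * d + s'" using s by simp
  have "q = (q * d + s) div d" "s = (q * d + s) mod d"
    "q' = (q' * d + s') div d" "s' = (q' * d + s') mod d" using s by simp_all
  then show "q = q' \<and> r = r'" using eq s by metis
qed simp

lemma pow_mat_Suc_left:
  assumes "A \<in> carrier_mat n n"
  shows "A ^\<^sub>m Suc k = A * A ^\<^sub>m k"
proof (induction k)
  case 0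
  then show ?case using assms by simp
next
  case (Suc k)
  have "A ^\<^sub>m Suc (Suc k) = (A * A ^\<^sub>m k) * A" using Suc by simp
  also have "\<dots> = A * (A ^\<^sub>m k * A)" using assms by (intro assoc_mult_mat) auto
  finally show ?case by simp
qed

lemma index_mult_mat_indicator_row:
  fixes A B :: "'a :: semiring_1 mat"
  assumes "A \<in> carrier_mat nr n" "B \<in> carrier_mat n nc" "a < nr" "b < nc" "S \<subseteq> {..<n}"
    and row: "\<And>c. c < n \<Longrightarrow> A $$ (a, c) = (if c \<in> S then 1 else 0)"
  shows "(A * B) $$ (a, b) = (\<Sum>c\<in>S. B $$ (c, b))"
proof -
  have "(A * B) $$ (a, b) = (\<Sum>c<n. A $$ (a, c) * B $$ (c, b))"
    using assms by (auto simp: scalar_prod_def lessThan_atLeast0 intro!: sum.cong)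
  also have "\<dots> = (\<Sum>c<n. if c \<in> S then B $$ (c, b) else 0)"
    using row by (intro sum.cong) auto
  also have "\<dots> = (\<Sum>c\<in>S. B $$ (c, b))"
    using \<open>S \<subseteq> {..<n}\<close> by (simp add: sum.If_cases Int_absorb1)
  finally show ?thesis .
qed

(* Matrix index of the i-th vertex (1 <= i <= n - 1) of blade k < m; the hub has index 0. *)
definition blade_vertex :: "nat \<Rightarrow> nat \<Rightarrow> nat \<Rightarrow> nat" where
  "blade_vertex n k i = k * (n - 1) + i"

lemma blade_vertex_eq_iff:
  assumes "1 \<le> i" "i \<le> n - 1" "1 \<le> i'" "i' \<le> n - 1"
  shows "blade_vertex n k i = blade_vertex n k' i' \<longleftrightarrow> k = k' \<and> i = i'"
  unfolding blade_vertex_def using mult_add_eq_mult_add_iff assms by blast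

lemma blade_vertex_eq_0_iff: "blade_vertex n k i = 0 \<longleftrightarrow> k * (n - 1) = 0 \<and> i = 0"
  unfolding blade_vertex_def by simp

lemma blade_vertex_less:
  assumes "k < m" "i \<le> n - 1"
  shows "blade_vertex n k i < m * (n - 1) + 1"
proof -
  have "blade_vertex n k i \<le> (k + 1) * (n - 1)" using assms unfolding blade_vertex_def by simp
  also have "\<dots> \<le> m * (n - 1)" using assms by (intro mult_le_mono1) simp
  finally show ?thesis by simp
qed

lemma windmill_index_cases:
  assumes "2 \<le> n" "a < m * (n - 1) + 1"
  obtains "a = 0" | k i where "k < m" "1 \<le> i" "i \<le> n - 1" "a = blade_vertex n k i"
proof (cases "a = 0")
  case False
  define k where "k = (a - 1) div (n - 1)"
  define i where "i = (a - 1) mod (n - 1) + 1"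
  have "a = blade_vertex n k i"
    using False div_mult_mod_eq[of "a - 1" "n - 1"] unfolding k_def i_def blade_vertex_def by simp
  moreover have "1 \<le> i" "i \<le> n - 1" using assms unfolding i_def by (auto simp: Suc_le_eq)
  moreover have "k < m" using assms False unfolding k_def by (simp add: less_mult_imp_div_less)
  ultimately show ?thesis using that by blast
qed simp

lemma windmill_adj_carrier: "windmill_adj m n \<in> carrier_mat (m * (n - 1) + 1) (m * (n - 1) + 1)"
  unfolding windmill_adj_def by simp

lemmas windmill_adj_dim [simp] = carrier_matD[OF windmill_adj_carrier]

context
  fixes m n :: nat
  assumes n: "n \<ge> 2"
begin

lemma windmill_edge_iff:
  "windmill_edge m n (a + 1) (b + 1) \<longleftrightarrow>
     a = 0 \<and> (\<exists>k<m. b = blade_vertex n k 1) \<or>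
     (\<exists>k<m. \<exists>i. 1 \<le> i \<and> i < n - 1 \<and> a = blade_vertex n k i \<and> b = blade_vertex n k (i + 1)) \<or>
     (\<exists>k<m. a = blade_vertex n k (n - 1) \<and> b = 0)"
  (is "_ \<longleftrightarrow> ?blades")
proof
  assume "windmill_edge m n (a + 1) (b + 1)"
  then show ?blades
    unfolding windmill_edge_def
  proof (elim disjE bexE conjE)
    fix k assume "k \<in> {1..m}" "a + 1 = 1" "b + 1 = (k - 1) * (n - 1) + 2"
    then show ?blades by (intro disjI1 conjI exI[of _ "k - 1"]) (auto simp: blade_vertex_def)
  next
    fix k i assume k: "k \<in> {1..m}" and i: "i \<in> {2..n - 1}"
      and a: "a + 1 = (k - 1) * (n - 1) + i" and b: "b + 1 = (k - 1) * (n - 1) + i + 1"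
    have "k - 1 < m" using k by auto
    moreover have "1 \<le> i - 1" "i - 1 < n - 1" using i by auto
    moreover have "a = blade_vertex n (k - 1) (i - 1)" "b = blade_vertex n (k - 1) (i - 1 + 1)"
      using i a b by (simp_all add: blade_vertex_def)
    ultimately show ?blades by blast
  next
    fix k assume "k \<in> {1..m}" "a + 1 = (k - 1) * (n - 1) + n" "b + 1 = 1"
    then show ?blades using n by (intro disjI2 exI[of _ "k - 1"]) (auto simp: blade_vertex_def)
  qed
next
  assume ?blades
  then show "windmill_edge m n (a + 1) (b + 1)"
  proof (elim disjE exE conjE)
    fix k assume "a = 0" "k < m" "b = blade_vertex n k 1"
    then show ?thesis unfolding windmill_edge_def
      by (intro disjI1 bexI[of _ "k + 1"]) (auto simp: blade_vertex_def)
  next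
    fix k i assume "k < m" "1 \<le> i" "i < n - 1"
      "a = blade_vertex n k i" "b = blade_vertex n k (i + 1)"
    then show ?thesis unfolding windmill_edge_def
      by (intro disjI2 disjI1 bexI[of _ "k + 1"] bexI[of _ "i + 1"]) (auto simp: blade_vertex_def)
  next
    fix k assume "k < m" "a = blade_vertex n k (n - 1)" "b = 0"
    then show ?thesis using n unfolding windmill_edge_def
      by (intro disjI2 bexI[of _ "k + 1"]) (auto simp: blade_vertex_def)
  qed
qed

lemma windmill_adj_hub_row:
  assumes "c < m * (n - 1) + 1"
  shows "windmill_adj m n $$ (0, c) = (if c \<in> (\<lambda>k. blade_vertex n k 1) ` {..<m} then 1 else 0)"
proof -
  have "windmill_edge m n (0 + 1) (c + 1) \<longleftrightarrow> c \<in> (\<lambda>k. blade_vertex n k 1) ` {..<m}"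
    using n unfolding windmill_edge_iff by (auto simp: blade_vertex_eq_0_iff)
  then show ?thesis using assms unfolding windmill_adj_def by simp
qed

lemma windmill_adj_blade_row:
  assumes "k < m" "1 \<le> i" "i \<le> n - 1" "c < m * (n - 1) + 1"
  shows "windmill_adj m n $$ (blade_vertex n k i, c) =
    (if c \<in> {if i < n - 1 then blade_vertex n k (i + 1) else 0} then 1 else 0)"
proof -
  have "windmill_edge m n (blade_vertex n k i + 1) (c + 1) \<longleftrightarrow>
      c = (if i < n - 1 then blade_vertex n k (i + 1) else 0)"
    using assms n unfolding windmill_edge_iff
    by (auto simp: blade_vertex_eq_iff blade_vertex_eq_0_iff)
  moreover have "blade_vertex n k i < m * (n - 1) + 1" using assms blade_vertex_less by blast
  ultimately show ?thesis using assms unfolding windmill_adj_def by simp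
qed

lemma windmill_pow_hub_Suc:
  assumes "b < m * (n - 1) + 1"
  shows "(windmill_adj m n ^\<^sub>m Suc q) $$ (0, b) =
    (\<Sum>k<m. (windmill_adj m n ^\<^sub>m q) $$ (blade_vertex n k 1, b))"
proof -
  have "(windmill_adj m n ^\<^sub>m Suc q) $$ (0, b) =
      (\<Sum>c\<in>(\<lambda>k. blade_vertex n k 1) ` {..<m}. (windmill_adj m n ^\<^sub>m q) $$ (c, b))"
    unfolding pow_mat_Suc_left[OF windmill_adj_carrier]
    using assms n blade_vertex_less windmill_adj_hub_row pow_carrier_mat[OF windmill_adj_carrier]
    by (intro index_mult_mat_indicator_row[OF windmill_adj_carrier]) auto
  also have "\<dots> = (\<Sum>k<m. (windmill_adj m n ^\<^sub>m q) $$ (blade_vertex n k 1, b))"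
    using n blade_vertex_eq_iff by (intro sum.reindex_cong[OF _ refl refl]) (auto simp: inj_on_def)
  finally show ?thesis .
qed

lemma windmill_pow_blade_Suc:
  assumes "k < m" "1 \<le> i" "i \<le> n - 1" "b < m * (n - 1) + 1"
  shows "(windmill_adj m n ^\<^sub>m Suc q) $$ (blade_vertex n k i, b) =
    (windmill_adj m n ^\<^sub>m q) $$ (if i < n - 1 then blade_vertex n k (i + 1) else 0, b)"
proof -
  have "(if i < n - 1 then blade_vertex n k (i + 1) else 0) < m * (n - 1) + 1"
    using assms blade_vertex_less[of k m "i + 1" n] by simp
  then have "(windmill_adj m n * windmill_adj m n ^\<^sub>m q) $$ (blade_vertex n k i, b) =
      (\<Sum>c\<in>{if i < n - 1 then blade_vertex n k (i + 1) else 0}. (windmill_adj m n ^\<^sub>m q) $$ (c, b))"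
    using assms blade_vertex_less windmill_adj_blade_row
    by (intro index_mult_mat_indicator_row[OF windmill_adj_carrier
          pow_carrier_mat[OF windmill_adj_carrier]]) auto
  then show ?thesis unfolding pow_mat_Suc_left[OF windmill_adj_carrier] by simp
qed

lemma windmill_pow_along_blade:
  assumes "k < m" "1 \<le> i" "i + t \<le> n - 1" "b < m * (n - 1) + 1"
  shows "(windmill_adj m n ^\<^sub>m (q + t)) $$ (blade_vertex n k i, b) =
    (windmill_adj m n ^\<^sub>m q) $$ (blade_vertex n k (i + t), b)"
  using assms(2,3)
proof (induction t arbitrary: i)
  case (Suc t)
  have "(windmill_adj m n ^\<^sub>m Suc (q + t)) $$ (blade_vertex n k i, b) =
      (windmill_adj m n ^\<^sub>m (q + t)) $$ (blade_vertex n k (i + 1), b)"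
    using windmill_pow_blade_Suc assms Suc.prems by simp
  also have "\<dots> = (windmill_adj m n ^\<^sub>m q) $$ (blade_vertex n k (i + Suc t), b)"
    using Suc.IH[of "i + 1"] Suc.prems by simp
  finally show ?case by simp
qed simp

lemma windmill_pow_blade_to_hub:
  assumes "k < m" "1 \<le> i" "i \<le> n - 1" "b < m * (n - 1) + 1"
  shows "(windmill_adj m n ^\<^sub>m (q + (n - i))) $$ (blade_vertex n k i, b) =
    (windmill_adj m n ^\<^sub>m q) $$ (0, b)"
proof -
  have "q + (n - i) = Suc q + (n - 1 - i)" using assms n by simp
  then have "(windmill_adj m n ^\<^sub>m (q + (n - i))) $$ (blade_vertex n k i, b) =
      (windmill_adj m n ^\<^sub>m Suc q) $$ (blade_vertex n k (n - 1), b)"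
    using windmill_pow_along_blade[of k i "n - 1 - i" b "Suc q"] assms by simp
  also have "\<dots> = (windmill_adj m n ^\<^sub>m q) $$ (0, b)"
    using windmill_pow_blade_Suc assms n by simp
  finally show ?thesis .
qed

lemma windmill_pow_hub_add_period:
  assumes "b < m * (n - 1) + 1"
  shows "(windmill_adj m n ^\<^sub>m (q + n)) $$ (0, b) = real m * (windmill_adj m n ^\<^sub>m q) $$ (0, b)"
proof -
  have "q + n = Suc (q + (n - 1))" using n by simp
  then have "(windmill_adj m n ^\<^sub>m (q + n)) $$ (0, b) =
      (\<Sum>k<m. (windmill_adj m n ^\<^sub>m (q + (n - 1))) $$ (blade_vertex n k 1, b))"
    using windmill_pow_hub_Suc[OF assms] by presburger
  also have "\<dots> = (\<Sum>k<m. (windmill_adj m n ^\<^sub>m q) $$ (0, b))"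
    using windmill_pow_blade_to_hub[of _ 1 b q] assms n by simp
  finally show ?thesis by simp
qed

lemma windmill_pow_add_period_index:
  assumes "n - 1 \<le> p" "a < m * (n - 1) + 1" "b < m * (n - 1) + 1"
  shows "(windmill_adj m n ^\<^sub>m (p + n)) $$ (a, b) = real m * (windmill_adj m n ^\<^sub>m p) $$ (a, b)"
proof -
  from n assms(2) show ?thesis
  proof (cases rule: windmill_index_cases)
    case 1
    then show ?thesis using windmill_pow_hub_add_period assms by simp
  next
    case (2 k i)
    have "(windmill_adj m n ^\<^sub>m (p + n)) $$ (a, b) =
        (windmill_adj m n ^\<^sub>m ((p + i - n) + n)) $$ (0, b)"
      using windmill_pow_blade_to_hub[of k i b "p + i"] 2 assms by simp
    also have "\<dots> = real m * (windmill_adj m n ^\<^sub>m (p + i - n)) $$ (0, b)"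
      using windmill_pow_hub_add_period assms by blast
    also have "\<dots> = real m * (windmill_adj m n ^\<^sub>m p) $$ (a, b)"
      using windmill_pow_blade_to_hub[of k i b "p + i - n"] 2 assms by simp
    finally show ?thesis .
  qed
qed

lemma windmill_pow_add_period:
  assumes "n - 1 \<le> p"
  shows "windmill_adj m n ^\<^sub>m (p + n) = real m \<cdot>\<^sub>m windmill_adj m n ^\<^sub>m p"
  using windmill_pow_add_period_index[OF assms] carrier_matD[OF windmill_adj_carrier]
  by (intro eq_matI) (auto split: if_splits)

lemma windmill_pow_add_periods:
  assumes "n - 1 \<le> p"
  shows "windmill_adj m n ^\<^sub>m (p + t * n) = real m ^ t \<cdot>\<^sub>m windmill_adj m n ^\<^sub>m p"
proof (induction t)
  case 0
  show ?case by (intro eq_matI) auto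
next
  case (Suc t)
  have "windmill_adj m n ^\<^sub>m (p + Suc t * n) = real m \<cdot>\<^sub>m windmill_adj m n ^\<^sub>m (p + t * n)"
    using windmill_pow_add_period[of "p + t * n"] assms by (simp add: algebra_simps)
  then show ?case using Suc.IH by (intro eq_matI) auto
qed

lemma windmill_pow_hub_to_blade:
  assumes "k < m" "1 \<le> i" "i \<le> n - 1"
  shows "(windmill_adj m n ^\<^sub>m i) $$ (0, blade_vertex n k i) = 1"
proof -
  have target: "blade_vertex n k i < m * (n - 1) + 1" using assms blade_vertex_less by blast
  obtain j where i: "i = Suc j" using assms by (cases i) auto
  have "(windmill_adj m n ^\<^sub>m i) $$ (0, blade_vertex n k i) =
      (\<Sum>k'<m. (windmill_adj m n ^\<^sub>m j) $$ (blade_vertex n k' 1, blade_vertex n k i))"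
    using windmill_pow_hub_Suc target i by simp
  also have "\<dots> = (\<Sum>k'<m. (windmill_adj m n ^\<^sub>m 0) $$ (blade_vertex n k' i, blade_vertex n k i))"
  proof (rule sum.cong)
    fix k' assume "k' \<in> {..<m}"
    then show "(windmill_adj m n ^\<^sub>m j) $$ (blade_vertex n k' 1, blade_vertex n k i) =
        (windmill_adj m n ^\<^sub>m 0) $$ (blade_vertex n k' i, blade_vertex n k i)"
      using windmill_pow_along_blade[of k' 1 j "blade_vertex n k i" 0] target assms i by simp
  qed simp
  also have "\<dots> = (\<Sum>k'<m. if k' = k then 1 else 0)"
    using target blade_vertex_less assms by (intro sum.cong) (auto simp: blade_vertex_eq_iff)
  also have "\<dots> = 1" using assms by simp
  finally show ?thesis .
qed

lemma windmill_pow_first_blade_entries: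
  assumes "0 < m"
  shows "(windmill_adj m n ^\<^sub>m (n - 1)) $$ (1, 0) = 1"
    and "(windmill_adj m n ^\<^sub>m (n - 2)) $$ (1, n - 1) = 1"
    and "(windmill_adj m n ^\<^sub>m (2 * n - 2)) $$ (1, n - 1) = 1"
    and "(windmill_adj m n ^\<^sub>m n) $$ (1, 1) = 1"
proof -
  have first_blade: "blade_vertex n 0 i = i" for i unfolding blade_vertex_def by simp
  have in_range: "1 < m * (n - 1) + 1" "n - 1 < m * (n - 1) + 1"
    using assms n blade_vertex_less[of 0 m _ n] first_blade by auto
  show "(windmill_adj m n ^\<^sub>m (n - 1)) $$ (1, 0) = 1"
    using windmill_pow_blade_to_hub[of 0 1 0 0] assms n first_blade by simp
  show "(windmill_adj m n ^\<^sub>m (n - 2)) $$ (1, n - 1) = 1"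
    using windmill_pow_along_blade[of 0 1 "n - 2" "n - 1" 0] assms n in_range first_blade by simp
  have "2 * n - 2 = (n - 1) + (n - 1)" "n = 1 + (n - 1)" using n by simp_all
  then show "(windmill_adj m n ^\<^sub>m (2 * n - 2)) $$ (1, n - 1) = 1"
    and "(windmill_adj m n ^\<^sub>m n) $$ (1, 1) = 1"
    using windmill_pow_blade_to_hub[of 0 1 "n - 1" "n - 1"] windmill_pow_blade_to_hub[of 0 1 1 1]
      windmill_pow_hub_to_blade[of 0 "n - 1"] windmill_pow_hub_to_blade[of 0 1]
      assms n in_range first_blade
    by simp_all
qed

end

theorem theorem3p1:
  fixes m n :: nat
  assumes "m \<ge> 2" and "n \<ge> 3"
  defines "M \<equiv> windmill_adj m n"
  defines "N \<equiv> m * (n - 1) + 1"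
  shows "M ^\<^sub>m (2 * n - 1) = real m \<cdot>\<^sub>m M ^\<^sub>m (n - 1)
    \<and> M ^\<^sub>m (n - 1) \<noteq> 0\<^sub>m N N
    \<and> M ^\<^sub>m (2 * n - 2) \<noteq> real m \<cdot>\<^sub>m M ^\<^sub>m (n - 2)
    \<and> M ^\<^sub>m n \<noteq> real m \<cdot>\<^sub>m 1\<^sub>m N
    \<and> M ^\<^sub>m (n ^ 2 - 1) = real m ^ (n - 1) \<cdot>\<^sub>m M ^\<^sub>m (n - 1)"
proof -
  have n: "n \<ge> 2" using assms by simp
  have "2 * n - 1 = (n - 1) + n" "n ^ 2 - 1 = (n - 1) + (n - 1) * n"
    using n by (simp_all add: power2_eq_square algebra_simps)
  then have part1: "M ^\<^sub>m (2 * n - 1) = real m \<cdot>\<^sub>m M ^\<^sub>m (n - 1)"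
    and part5: "M ^\<^sub>m (n ^ 2 - 1) = real m ^ (n - 1) \<cdot>\<^sub>m M ^\<^sub>m (n - 1)"
    unfolding M_def using windmill_pow_add_period[OF n] windmill_pow_add_periods[OF n] by simp_all
  note entries = windmill_pow_first_blade_entries[OF n, of m, folded M_def]
  have dims: "dim_row M = N" "dim_col M = N" and in_range: "1 < N" "n - 1 < N"
    unfolding M_def N_def using assms by (auto intro: less_le_trans)
  have "(M ^\<^sub>m (n - 1)) $$ (1, 0) \<noteq> 0\<^sub>m N N $$ (1, 0)"
    and "(M ^\<^sub>m (2 * n - 2)) $$ (1, n - 1) \<noteq> (real m \<cdot>\<^sub>m M ^\<^sub>m (n - 2)) $$ (1, n - 1)"
    and "(M ^\<^sub>m n) $$ (1, 1) \<noteq> (real m \<cdot>\<^sub>m 1\<^sub>m N) $$ (1, 1)"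
    using entries dims in_range \<open>m \<ge> 2\<close> by simp_all
  then show ?thesis using part1 part5 by metis
qed

end
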